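(* Let $F:\mathcal{G}_{\Sigma,\Delta,\pi}\to\mathcal{G}_{\Sigma,\Delta,\pi}$ be a causal graph dynamics with local rule $f:\mathcal{D}^r_{\Sigma,\Delta,\pi}\to\mathcal{G}_{\Sigma,\Delta,\pi}$ of radius $r$ (i.e. $F(G)=\bigcup_{v\in V(G)} f(G^r_v)$ for all $G$). If $f$ is monotonic (from the subdisk order to the subgraph order), then $F$ is the pointwise left Kan extension of $f$ along the pointer dropping function $i:\mathcal{D}^r_{\Sigma,\Delta,\pi}\to\mathcal{G}_{\Sigma,\Delta,\pi}$, $i((H,c))=H$; that is, for every graph $G$, the set $\{f(D)\mid D\in\mathcal{D}^r_{\Sigma,\Delta,\pi},\ i(D)\subseteq G\}$ has a supremum in $(\mathcal{G}_{\Sigma,\Delta,\pi},\subseteq)$ and this supremum equals $F(G)$.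
   Context: Fix an uncountably infinite set $\mathcal{V}$ of vertex names, sets $\Sigma,\Delta$ and a finite set $\pi$ of ports. A graph $G$ (with states in $\Sigma,\Delta$ and ports in $\pi$) consists of a countable set $V(G)\subset\mathcal{V}$; a set $E(G)$ of two-element subsets of $V(G)\times\pi$ that are pairwise disjoint (each $u\!:\!i:=(u,i)$ lies in at most one edge); partial functions $\sigma(G):V(G)\rightharpoonup\Sigma$ and $\delta(G):E(G)\rightharpoonup\Delta$. $\mathcal{G}_{\Sigma,\Delta,\pi}$ is the set of such graphs; a pointed graph is $(G,v)$ with $v\in V(G)$. Subgraph order: $G\subseteq H$ iff $V(G)\subseteq V(H)$, $E(G)\subseteq E(H)$, $\sigma(G)\subseteq\sigma(H)$, $\delta(G)\subseteq\delta(H)$ (partial functions viewed as sets of input–output pairs); on pointed graphs $(G,v)\subseteq(H,u)$ iff $G\subseteq H$ and $v=u$ (restricted to disks: subdisk order). Two graphs are consistent if $E(G)\cup E(H)$ consists of pairwise disjoint two-element sets and $\sigma(G),\sigma(H)$ agree where both are defined, and likewise $\delta(G),\delta(H)$; then $G\cup H$ is the componentwise union. The empty graph is $\varnothing$. Distance $d_G(u,v)$ is the length of a shortest path, a path being a sequence of vertices with consecutive vertices joined by an edge (through some ports); $B_G(c,r)=\{u\in V(G)\mid d_G(c,u)\le r\}$. The disk of radius $r$ and center $c\in V(G)$ is the pointed graph $G^r_c=(H,c)$ with $V(H)=B_G(c,r+1)$, $E(H)=\{\{u\!:\!i,v\!:\!j\}\in E(G)\mid \{u,v\}\cap B_G(c,r)\neq\emptyset\}$,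 $\sigma(H)=\sigma(G)$ restricted to $B_G(c,r)$, $\delta(H)=\delta(G)$ restricted to $E(H)$. $\mathcal{D}^r_{\Sigma,\Delta,\pi}=\{G^r_c\mid G\in\mathcal{G}_{\Sigma,\Delta,\pi},c\in V(G)\}$. A renaming is a bijection $R:\mathcal{V}\to\mathcal{V}$ acting on edges by $R(\{u\!:\!i,v\!:\!j\})=\{R(u)\!:\!i,R(v)\!:\!j\}$, on graphs by $V(R(G))=R(V(G))$, $E(R(G))=R(E(G))$, $\sigma(R(G))=\sigma(G)\circ R^{-1}$, $\delta(R(G))=\delta(G)\circ R^{-1}$, and on pointed graphs by $R(G,v)=(R(G),R(v))$. A local rule of radius $r$ is a function $f:\mathcal{D}^r_{\Sigma,\Delta,\pi}\to\mathcal{G}_{\Sigma,\Delta,\pi}$ such that (1) for every renaming $R$ there is a renaming $R'$ with $f\circ R=R'\circ f$; (2) for every family $(H_k,v_k)_k$ of radius-$r$ disks with $\bigcap_k H_k=\varnothing$, $\bigcap_k f((H_k,v_k))=\varnothing$ (intersection componentwise); (3) there is $b$ with $|V(f(D))|\le b$ for all $D$; (4) for every $G$ and $u,v\in V(G)$, $f(G^r_u)$ and $f(G^r_v)$ are consistent. A causal graph dynamics (CGD) is a map $F:\mathcal{G}_{\Sigma,\Delta,\pi}\to\mathcal{G}_{\Sigma,\Delta,\pi}$ for which there exist $r$ and a local rule $f$ of radius $r$ with $F(G)=\bigcup_{v\in V(G)}f(G^r_v)$ for all $G$. *)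

theory Defs
  imports "HOL-Library.Countable_Set"
begin

text \<open>Graphs with vertex names in 'v, vertex states in 's, edge states in 'd, ports in the
finite type 'p. The partial functions sigma and delta are represented as sets of
input-output pairs (their graphs); well-formedness requires them to be single-valued.\<close>

record ('v, 's, 'd, 'p) graph =
  gV :: "'v set"
  gE :: "('v \<times> 'p) set set"
  gsig :: "('v \<times> 's) set"
  gdel :: "(('v \<times> 'p) set \<times> 'd) set"

definition two_elem :: "'a set \<Rightarrow> bool" where
  "two_elem e \<longleftrightarrow> (\<exists>a b. a \<noteq> b \<and> e = {a, b})"

definition wf_graph :: "('v, 's, 'd, 'p::finite) graph \<Rightarrow> bool" where
  "wf_graph G \<longleftrightarrow>
     countable (gV G)
   \<and> (\<forall>e\<in>gE G. two_elem e \<and> e \<subseteq> gV G \<times> UNIV)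
   \<and> (\<forall>e1\<in>gE G. \<forall>e2\<in>gE G. e1 \<noteq> e2 \<longrightarrow> e1 \<inter> e2 = {})
   \<and> single_valued (gsig G) \<and> Domain (gsig G) \<subseteq> gV G
   \<and> single_valued (gdel G) \<and> Domain (gdel G) \<subseteq> gE G"

definition graph_le :: "('v, 's, 'd, 'p) graph \<Rightarrow> ('v, 's, 'd, 'p) graph \<Rightarrow> bool" where
  "graph_le G H \<longleftrightarrow> gV G \<subseteq> gV H \<and> gE G \<subseteq> gE H \<and> gsig G \<subseteq> gsig H \<and> gdel G \<subseteq> gdel H"

definition pgraph_le :: "('v, 's, 'd, 'p) graph \<times> 'v \<Rightarrow> ('v, 's, 'd, 'p) graph \<times> 'v \<Rightarrow> bool" where
  "pgraph_le D1 D2 \<longleftrightarrow> graph_le (fst D1) (fst D2) \<and> snd D1 = snd D2"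

definition empty_graph :: "('v, 's, 'd, 'p) graph" where
  "empty_graph = \<lparr>gV = {}, gE = {}, gsig = {}, gdel = {}\<rparr>"

definition graph_Union :: "('v, 's, 'd, 'p) graph set \<Rightarrow> ('v, 's, 'd, 'p) graph" where
  "graph_Union S = \<lparr>gV = \<Union>(gV ` S), gE = \<Union>(gE ` S), gsig = \<Union>(gsig ` S), gdel = \<Union>(gdel ` S)\<rparr>"

definition graph_Inter :: "('v, 's, 'd, 'p) graph set \<Rightarrow> ('v, 's, 'd, 'p) graph" where
  "graph_Inter S = \<lparr>gV = \<Inter>(gV ` S), gE = \<Inter>(gE ` S), gsig = \<Inter>(gsig ` S), gdel = \<Inter>(gdel ` S)\<rparr>"

definition consistent :: "('v, 's, 'd, 'p) graph \<Rightarrow> ('v, 's, 'd, 'p) graph \<Rightarrow> bool" where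
  "consistent G H \<longleftrightarrow>
     (\<forall>e\<in>gE G \<union> gE H. two_elem e)
   \<and> (\<forall>e1\<in>gE G \<union> gE H. \<forall>e2\<in>gE G \<union> gE H. e1 \<noteq> e2 \<longrightarrow> e1 \<inter> e2 = {})
   \<and> (\<forall>x a b. (x, a) \<in> gsig G \<longrightarrow> (x, b) \<in> gsig H \<longrightarrow> a = b)
   \<and> (\<forall>x a b. (x, a) \<in> gdel G \<longrightarrow> (x, b) \<in> gdel H \<longrightarrow> a = b)"

definition adj :: "('v, 's, 'd, 'p) graph \<Rightarrow> 'v \<Rightarrow> 'v \<Rightarrow> bool" where
  "adj G u v \<longleftrightarrow> (\<exists>i j. {(u, i), (v, j)} \<in> gE G)"

definition gball :: "('v, 's, 'd, 'p) graph \<Rightarrow> 'v \<Rightarrow> nat \<Rightarrow> 'v set" where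
  "gball G c r = {u \<in> gV G. \<exists>k\<le>r. (c, u) \<in> {(x, y). adj G x y} ^^ k}"

definition disk :: "('v, 's, 'd, 'p) graph \<Rightarrow> nat \<Rightarrow> 'v \<Rightarrow> ('v, 's, 'd, 'p) graph \<times> 'v" where
  "disk G r c =
    (let Er = {e \<in> gE G. \<exists>u i v j. e = {(u, i), (v, j)} \<and> (u \<in> gball G c r \<or> v \<in> gball G c r)}
     in (\<lparr>gV = gball G c (Suc r), gE = Er,
          gsig = {p \<in> gsig G. fst p \<in> gball G c r},
          gdel = {p \<in> gdel G. fst p \<in> Er}\<rparr>, c))"

definition disks :: "nat \<Rightarrow> (('v, 's, 'd, 'p::finite) graph \<times> 'v) set" where
  "disks r = {disk G r c | G c. wf_graph G \<and> c \<in> gV G}"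

definition rename_edge :: "('v \<Rightarrow> 'v) \<Rightarrow> ('v \<times> 'p) set \<Rightarrow> ('v \<times> 'p) set" where
  "rename_edge R e = (\<lambda>(u, i). (R u, i)) ` e"

definition rename_graph :: "('v \<Rightarrow> 'v) \<Rightarrow> ('v, 's, 'd, 'p) graph \<Rightarrow> ('v, 's, 'd, 'p) graph" where
  "rename_graph R G = \<lparr>gV = R ` gV G, gE = rename_edge R ` gE G,
      gsig = (\<lambda>(v, s). (R v, s)) ` gsig G,
      gdel = (\<lambda>(e, d). (rename_edge R e, d)) ` gdel G\<rparr>"

definition rename_pointed :: "('v \<Rightarrow> 'v) \<Rightarrow> ('v, 's, 'd, 'p) graph \<times> 'v \<Rightarrow> ('v, 's, 'd, 'p) graph \<times> 'v" where
  "rename_pointed R D = (rename_graph R (fst D), R (snd D))"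

definition local_rule :: "nat \<Rightarrow> (('v, 's, 'd, 'p::finite) graph \<times> 'v \<Rightarrow> ('v, 's, 'd, 'p) graph) \<Rightarrow> bool" where
  "local_rule r f \<longleftrightarrow>
     (\<forall>D\<in>disks r. wf_graph (f D))
   \<and> (\<forall>R. bij R \<longrightarrow> (\<exists>R'. bij R' \<and> (\<forall>D\<in>disks r. f (rename_pointed R D) = rename_graph R' (f D))))
   \<and> (\<forall>S. S \<subseteq> disks r \<longrightarrow> S \<noteq> {} \<longrightarrow> graph_Inter (fst ` S) = empty_graph
          \<longrightarrow> graph_Inter (f ` S) = empty_graph)
   \<and> (\<exists>b::nat. \<forall>D\<in>disks r. finite (gV (f D)) \<and> card (gV (f D)) \<le> b)
   \<and> (\<forall>G u v. wf_graph G \<longrightarrow> u \<in> gV G \<longrightarrow> v \<in> gV G \<longrightarrow> consistent (f (disk G r u)) (f (disk G r v)))"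

definition is_graph_sup :: "('v, 's, 'd, 'p::finite) graph set \<Rightarrow> ('v, 's, 'd, 'p) graph \<Rightarrow> bool" where
  "is_graph_sup S X \<longleftrightarrow> wf_graph X \<and> (\<forall>Y\<in>S. graph_le Y X)
     \<and> (\<forall>Z. wf_graph Z \<longrightarrow> (\<forall>Y\<in>S. graph_le Y Z) \<longrightarrow> graph_le X Z)"

end

theory Submission
  imports Defs
begin

text \<open>A disk D = (H, c) that is a subgraph of G is a subdisk of the disk of G at c: every path
of length at most r + 1 from c in H only uses edges that D keeps, so the balls of H around c lie
in those of G. By monotonicity f D is then below f applied to a disk of G, so F G, the union of
the f-images of the disks of G, bounds every f D with D below G; being the union of some of
these, it is the least bound. It is a well-formed graph because the images are finite,
countably many and pairwise consistent.\<close>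

abbreviation adj_rel :: "('v, 's, 'd, 'p) graph \<Rightarrow> ('v \<times> 'v) set" where
  "adj_rel G \<equiv> {(x, y). adj G x y}"

lemma graph_le_trans: "graph_le A B \<Longrightarrow> graph_le B C \<Longrightarrow> graph_le A C"
  by (auto simp: graph_le_def)

lemma graph_le_graph_Union: "Y \<in> U \<Longrightarrow> graph_le Y (graph_Union U)"
  by (auto simp: graph_le_def graph_Union_def)

lemma graph_Union_least: "(\<And>Y. Y \<in> U \<Longrightarrow> graph_le Y Z) \<Longrightarrow> graph_le (graph_Union U) Z"
  unfolding graph_le_def graph_Union_def by (simp add: UN_subset_iff)

lemma consistentD:
  assumes "consistent G H"
  shows consistent_edges_disjoint: "e1 \<in> gE G \<Longrightarrow> e2 \<in> gE H \<Longrightarrow> e1 \<noteq> e2 \<Longrightarrow> e1 \<inter> e2 = {}"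
    and consistent_gsig: "(x, a) \<in> gsig G \<Longrightarrow> (x, b) \<in> gsig H \<Longrightarrow> a = b"
    and consistent_gdel: "(e, d) \<in> gdel G \<Longrightarrow> (e, d') \<in> gdel H \<Longrightarrow> d = d'"
  using assms unfolding consistent_def by blast+

lemma wf_graph_countable: "wf_graph G \<Longrightarrow> countable (gV G)"
  unfolding wf_graph_def by simp

lemma wf_graph_edge_subset: "wf_graph G \<Longrightarrow> e \<in> gE G \<Longrightarrow> e \<subseteq> gV G \<times> UNIV"
  unfolding wf_graph_def by simp

lemma wf_graph_edge_in_vertices:
  assumes "wf_graph G" and "{(u, i), (v, j)} \<in> gE G"
  shows "u \<in> gV G" and "v \<in> gV G"
  using wf_graph_edge_subset[OF assms] by auto

lemma single_valued_UN_pairwise: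
  assumes "\<And>i j x a b. i \<in> I \<Longrightarrow> j \<in> I \<Longrightarrow> (x, a) \<in> R i \<Longrightarrow> (x, b) \<in> R j \<Longrightarrow> a = b"
  shows "single_valued (\<Union>i\<in>I. R i)"
  using assms unfolding single_valued_def by blast

lemma wf_graph_graph_Union:
  assumes wf: "\<And>Y. Y \<in> U \<Longrightarrow> wf_graph Y"
    and fin: "\<And>Y. Y \<in> U \<Longrightarrow> finite (gV Y)"
    and "countable U"
    and con: "\<And>Y1 Y2. Y1 \<in> U \<Longrightarrow> Y2 \<in> U \<Longrightarrow> consistent Y1 Y2"
  shows "wf_graph (graph_Union U)"
proof -
  from wf have edges: "two_elem e \<and> e \<subseteq> gV Y \<times> UNIV" if "Y \<in> U" "e \<in> gE Y" for Y e
    using that unfolding wf_graph_def by blast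
  from wf have domains: "Domain (gsig Y) \<subseteq> gV Y" "Domain (gdel Y) \<subseteq> gE Y" if "Y \<in> U" for Y
    using that unfolding wf_graph_def by blast+
  have "countable (\<Union>(gV ` U))"
    using \<open>countable U\<close> fin by (intro countable_UN) (auto intro: countable_finite)
  moreover have "\<forall>e\<in>\<Union>(gE ` U). two_elem e \<and> e \<subseteq> \<Union>(gV ` U) \<times> UNIV"
    using edges by blast
  moreover have "\<forall>e1\<in>\<Union>(gE ` U). \<forall>e2\<in>\<Union>(gE ` U). e1 \<noteq> e2 \<longrightarrow> e1 \<inter> e2 = {}"
    using con consistent_edges_disjoint by blast
  moreover have "single_valued (\<Union>(gsig ` U))"
    by (rule single_valued_UN_pairwise) (rule consistent_gsig[OF con])
  moreover have "single_valued (\<Union>(gdel ` U))"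
    by (rule single_valued_UN_pairwise) (rule consistent_gdel[OF con])
  moreover have "Domain (\<Union>(gsig ` U)) \<subseteq> \<Union>(gV ` U)" "Domain (\<Union>(gdel ` U)) \<subseteq> \<Union>(gE ` U)"
    using domains unfolding Domain_Union by fastforce+
  ultimately show ?thesis
    by (simp add: wf_graph_def graph_Union_def)
qed

lemma is_graph_sup_graph_Union:
  assumes "wf_graph (graph_Union U)" and "U \<subseteq> S"
    and "\<And>Y. Y \<in> S \<Longrightarrow> \<exists>X\<in>U. graph_le Y X"
  shows "is_graph_sup S (graph_Union U)"
  unfolding is_graph_sup_def
  using assms graph_le_graph_Union graph_Union_least graph_le_trans by (metis subsetD)

lemma disk_fields:
  "snd (disk G r c) = c"
  "gV (fst (disk G r c)) = gball G c (Suc r)"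
  "gE (fst (disk G r c)) =
     {e \<in> gE G. \<exists>u i v j. e = {(u, i), (v, j)} \<and> (u \<in> gball G c r \<or> v \<in> gball G c r)}"
  "gsig (fst (disk G r c)) = {p \<in> gsig G. fst p \<in> gball G c r}"
  "gdel (fst (disk G r c)) = {p \<in> gdel G. fst p \<in> gE (fst (disk G r c))}"
  by (simp_all add: disk_def Let_def)

lemma disk_graph_le: "graph_le (fst (disk G r c)) G"
  by (auto simp: graph_le_def disk_def Let_def gball_def)

lemma center_in_disk: "c \<in> gV G \<Longrightarrow> c \<in> gV (fst (disk G r c))"
  unfolding disk_def Let_def gball_def by force

lemma adj_relpow_transfer_from_disk:
  assumes wf: "wf_graph H" and le: "graph_le (fst (disk H r c)) G"
  shows "k \<le> Suc r \<Longrightarrow> (c, u) \<in> adj_rel H ^^ k \<Longrightarrow> (c, u) \<in> adj_rel G ^^ k"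
proof (induction k arbitrary: u)
  case 0
  then show ?case by simp
next
  case (Suc k)
  from Suc.prems(2) obtain x where cx: "(c, x) \<in> adj_rel H ^^ k" and "adj H x u"
    by auto
  then obtain i j where e: "{(x, i), (u, j)} \<in> gE H"
    unfolding adj_def by blast
  with wf have "x \<in> gV H"
    by (rule wf_graph_edge_in_vertices)
  with cx Suc.prems(1) have "x \<in> gball H c r"
    unfolding gball_def by auto
  with e have "{(x, i), (u, j)} \<in> gE (fst (disk H r c))"
    unfolding disk_def Let_def by auto
  with le have "(x, u) \<in> adj_rel G"
    unfolding graph_le_def adj_def by blast
  moreover have "(c, x) \<in> adj_rel G ^^ k"
    using Suc.IH[OF _ cx] Suc.prems(1) by simp
  ultimately show ?case
    by (rule relpow_Suc_I[rotated])
qed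

lemma gball_mono_from_disk:
  assumes wf: "wf_graph H" and le: "graph_le (fst (disk H r c)) G" and "k \<le> Suc r"
  shows "gball H c k \<subseteq> gball G c k"
proof
  fix u
  assume "u \<in> gball H c k"
  then obtain m where m: "m \<le> k" "(c, u) \<in> adj_rel H ^^ m" and "u \<in> gV H"
    unfolding gball_def by auto
  moreover from m(1) \<open>k \<le> Suc r\<close> have "m \<le> Suc r"
    by simp
  ultimately have "u \<in> gV (fst (disk H r c))"
    unfolding disk_def Let_def gball_def by auto
  with le have "u \<in> gV G"
    unfolding graph_le_def by blast
  moreover have "(c, u) \<in> adj_rel G ^^ m"
    using adj_relpow_transfer_from_disk[OF wf le] m \<open>k \<le> Suc r\<close> by simp
  ultimately show "u \<in> gball G c k"
    using m unfolding gball_def by auto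
qed

lemma disk_pgraph_le_disk:
  assumes wf: "wf_graph H" and le: "graph_le (fst (disk H r c)) G"
  shows "pgraph_le (disk H r c) (disk G r c)"
proof -
  have balls: "gball H c r \<subseteq> gball G c r" "gball H c (Suc r) \<subseteq> gball G c (Suc r)"
    using gball_mono_from_disk[OF wf le] by simp_all
  have "gE (fst (disk H r c)) \<subseteq> gE G"
    using le unfolding graph_le_def by blast
  with balls(1) have E: "gE (fst (disk H r c)) \<subseteq> gE (fst (disk G r c))"
    unfolding disk_fields by blast
  have "gsig (fst (disk H r c)) \<subseteq> gsig (fst (disk G r c))"
    using le balls(1) unfolding graph_le_def disk_fields by blast
  moreover have "gdel (fst (disk H r c)) \<subseteq> gdel (fst (disk G r c))"
    using le E unfolding graph_le_def disk_fields by blast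
  ultimately show ?thesis
    using E balls(2) unfolding pgraph_le_def graph_le_def disk_fields by blast
qed

lemma disk_in_disks: "wf_graph G \<Longrightarrow> v \<in> gV G \<Longrightarrow> disk G r v \<in> disks r"
  unfolding disks_def by blast

lemma disks_le_disk_at_center:
  assumes "D \<in> disks r" and le: "graph_le (fst D) G"
  shows "snd D \<in> gV G" and "pgraph_le D (disk G r (snd D))"
proof -
  from \<open>D \<in> disks r\<close> obtain H c where D: "D = disk H r c" and "wf_graph H" "c \<in> gV H"
    unfolding disks_def by blast
  then have "snd D = c" and "c \<in> gV (fst D)"
    using center_in_disk[of c H r] by (simp_all add: disk_fields(1))
  with le show "snd D \<in> gV G"
    unfolding graph_le_def by auto
  show "pgraph_le D (disk G r (snd D))"
    using disk_pgraph_le_disk[OF \<open>wf_graph H\<close>] le D \<open>snd D = c\<close> by simp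
qed

lemma local_ruleD:
  assumes "local_rule r f"
  shows local_rule_wf_graph: "D \<in> disks r \<Longrightarrow> wf_graph (f D)"
    and local_rule_finite: "D \<in> disks r \<Longrightarrow> finite (gV (f D))"
    and local_rule_consistent: "wf_graph G \<Longrightarrow> u \<in> gV G \<Longrightarrow> v \<in> gV G \<Longrightarrow>
      consistent (f (disk G r u)) (f (disk G r v))"
  using assms unfolding local_rule_def by auto

lemma wf_graph_Union_disk_images:
  assumes "local_rule r f" and "wf_graph G"
  shows "wf_graph (graph_Union ((\<lambda>v. f (disk G r v)) ` gV G))"
proof (rule wf_graph_graph_Union)
  fix Y
  assume "Y \<in> (\<lambda>v. f (disk G r v)) ` gV G"
  then obtain v where "v \<in> gV G" and Y: "Y = f (disk G r v)"
    by blast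
  have "disk G r v \<in> disks r"
    using assms(2) \<open>v \<in> gV G\<close> by (rule disk_in_disks)
  then show "wf_graph Y" and "finite (gV Y)"
    unfolding Y using local_ruleD[OF assms(1)] by simp_all
next
  show "countable ((\<lambda>v. f (disk G r v)) ` gV G)"
    using assms(2) by (simp add: wf_graph_countable)
  show "consistent Y1 Y2"
    if "Y1 \<in> (\<lambda>v. f (disk G r v)) ` gV G" and "Y2 \<in> (\<lambda>v. f (disk G r v)) ` gV G" for Y1 Y2
    using that local_rule_consistent[OF assms] by auto
qed

lemma disk_images_subset_images_below:
  assumes "wf_graph G"
  shows "(\<lambda>v. f (disk G r v)) ` gV G \<subseteq> {f D | D. D \<in> disks r \<and> graph_le (fst D) G}"
proof
  fix Y
  assume "Y \<in> (\<lambda>v. f (disk G r v)) ` gV G"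
  then obtain v where "v \<in> gV G" and Y: "Y = f (disk G r v)"
    by blast
  with assms have "disk G r v \<in> disks r \<and> graph_le (fst (disk G r v)) G"
    by (simp add: disk_in_disks disk_graph_le)
  then show "Y \<in> {f D | D. D \<in> disks r \<and> graph_le (fst D) G}"
    unfolding Y by blast
qed

lemma image_below_dominated_by_disk_image:
  assumes mono: "\<forall>D1\<in>disks r. \<forall>D2\<in>disks r. pgraph_le D1 D2 \<longrightarrow> graph_le (f D1) (f D2)"
    and "wf_graph G" and "D \<in> disks r" and "graph_le (fst D) G"
  shows "\<exists>X\<in>(\<lambda>v. f (disk G r v)) ` gV G. graph_le (f D) X"
proof -
  have "snd D \<in> gV G" and "pgraph_le D (disk G r (snd D))"
    using disks_le_disk_at_center[OF \<open>D \<in> disks r\<close> \<open>graph_le (fst D) G\<close>] by simp_all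
  moreover from \<open>wf_graph G\<close> \<open>snd D \<in> gV G\<close> have "disk G r (snd D) \<in> disks r"
    by (rule disk_in_disks)
  ultimately have "graph_le (f D) (f (disk G r (snd D)))"
    using mono \<open>D \<in> disks r\<close> by blast
  with \<open>snd D \<in> gV G\<close> show ?thesis
    by blast
qed

theorem proposition2p8:
  fixes F :: "('v, 's, 'd, 'p::finite) graph \<Rightarrow> ('v, 's, 'd, 'p) graph"
    and f :: "('v, 's, 'd, 'p) graph \<times> 'v \<Rightarrow> ('v, 's, 'd, 'p) graph"
    and r :: nat
  assumes "uncountable (UNIV :: 'v set)"
    and "local_rule r f"
    and "\<forall>G. wf_graph G \<longrightarrow> F G = graph_Union ((\<lambda>v. f (disk G r v)) ` gV G)"
    and "\<forall>D1\<in>disks r. \<forall>D2\<in>disks r. pgraph_le D1 D2 \<longrightarrow> graph_le (f D1) (f D2)"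
  shows "\<forall>G. wf_graph G \<longrightarrow>
           is_graph_sup {f D | D. D \<in> disks r \<and> graph_le (fst D) G} (F G)"
proof (intro allI impI)
  fix G :: "('v, 's, 'd, 'p) graph"
  assume "wf_graph G"
  let ?S = "{f D | D. D \<in> disks r \<and> graph_le (fst D) G}"
  let ?U = "(\<lambda>v. f (disk G r v)) ` gV G"
  have "is_graph_sup ?S (graph_Union ?U)"
  proof (rule is_graph_sup_graph_Union)
    show "wf_graph (graph_Union ?U)"
      using \<open>local_rule r f\<close> \<open>wf_graph G\<close> by (rule wf_graph_Union_disk_images)
    show "?U \<subseteq> ?S"
      using \<open>wf_graph G\<close> by (rule disk_images_subset_images_below)
    show "\<exists>X\<in>?U. graph_le Y X" if "Y \<in> ?S" for Y
      using that image_below_dominated_by_disk_image[OF assms(4) \<open>wf_graph G\<close>] by blast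
  qed
  with assms(3) \<open>wf_graph G\<close> show "is_graph_sup ?S (F G)"
    by simp
qed

end
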